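(* Let $\mathcal{H}$ be a finite-dimensional real Hilbert space, let $A\colon \mathcal{H}\rightrightarrows\mathcal{H}$ be maximally monotone, let $B\colon \mathcal{H}\to\mathcal{H}$ be monotone and locally Lipschitz continuous, and suppose $(A+B)^{-1}(0)\neq\varnothing$. Fix $\delta\in(0,1)$, $\sigma\in(0,1)$, initial points $x_0,x_{-1}\in\mathcal{H}$ and an initial stepsize $\lambda_{-1}>0$. For $k=0,1,2,\dots$, having $x_k$, $x_{k-1}$ and $\lambda_{k-1}$, choose $\rho_k\in\{1,\sigma^{-1}\}$, set $\lambda_k=\rho_k\lambda_{k-1}\sigma^{i}$ where $i$ is the smallest nonnegative integer such that the point $$x_{k+1} := J_{\lambda_k A}\bigl(x_k - \lambda_k B(x_k) - \lambda_{k-1}(B(x_k)-B(x_{k-1}))\bigr)$$ satisfies $\lambda_k\|B(x_{k+1})-B(x_k)\|\leq \frac{\delta}{2}\|x_{k+1}-x_k\|$, and define $x_{k+1}$ accordingly. Then the sequence $(x_k)$ so generated converges to a point contained in $(A+B)^{-1}(0)$.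
   Context: $J_{\lambda A}:=(I+\lambda A)^{-1}$ denotes the resolvent of $\lambda A$. $B$ is locally Lipschitz if every point has a neighbourhood on which $B$ is Lipschitz. *)

theory Defs
  imports "HOL-Analysis.Analysis"
begin

definition monotone_op :: "('a::real_inner \<Rightarrow> 'a set) \<Rightarrow> bool" where
  "monotone_op A \<longleftrightarrow>
     (\<forall>x y u v. u \<in> A x \<longrightarrow> v \<in> A y \<longrightarrow> 0 \<le> (u - v) \<bullet> (x - y))"

definition maximal_monotone :: "('a::real_inner \<Rightarrow> 'a set) \<Rightarrow> bool" where
  "maximal_monotone A \<longleftrightarrow> monotone_op A \<and>
     (\<forall>A'. monotone_op A' \<and> (\<forall>x. A x \<subseteq> A' x) \<longrightarrow> A' = A)"

definition monotone_fun :: "('a::real_inner \<Rightarrow> 'a) \<Rightarrow> bool" where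
  "monotone_fun B \<longleftrightarrow> (\<forall>x y. 0 \<le> (B x - B y) \<bullet> (x - y))"

definition locally_lipschitz :: "('a::metric_space \<Rightarrow> 'b::metric_space) \<Rightarrow> bool" where
  "locally_lipschitz B \<longleftrightarrow>
     (\<forall>x. \<exists>U L. open U \<and> x \<in> U \<and> L-lipschitz_on U B)"

text \<open>Resolvent J_{lA} = (I + l A)^{-1}, evaluated at z: the (for maximally
  monotone A and l > 0 unique) point p with z \<in> p + l A p.\<close>
definition resolvent :: "real \<Rightarrow> ('a::real_vector \<Rightarrow> 'a set) \<Rightarrow> 'a \<Rightarrow> 'a" where
  "resolvent l A z = (THE p. \<exists>u\<in>A p. p + l *\<^sub>R u = z)"

definition zeros_sum :: "('a::real_vector \<Rightarrow> 'a set) \<Rightarrow> ('a \<Rightarrow> 'a) \<Rightarrow> 'a set" where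
  "zeros_sum A B = {x. \<exists>u\<in>A x. u + B x = 0}"

end

(* For a zero z of A + B, monotonicity of A and B and the acceptance test make
     E_k = |x_{k+1} - z|^2 - 2 lam_k <B x_{k+1} - B x_k, x_{k+1} - z> + delta/2 |x_{k+1} - x_k|^2
   drop by at least (1 - delta) |x_{k+2} - x_{k+1}|^2 per step, while
   E_k >= (1 - delta/2) |x_{k+1} - z|^2. So the iterates are bounded, x_{k+1} - x_k tends to 0 and
   |x_k - z| converges for every zero z. All iterates and all trial points of stepsize at most
   1/sigma then lie in one ball, on which B is L-Lipschitz; a rejected stepsize l satisfies
   delta/2 < l L, so the stepsizes are bounded below and the residual of 0 in A x_{k+1} + B x_{k+1}
   left by the resolvent step tends to 0. As graphs of maximally monotone operators are closed,
   every cluster point is a zero, and convergence of |x_k - z| for that zero forces convergence of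
   the whole sequence. Resolvents are everywhere defined by Minty's theorem, obtained in finite
   dimensions from the Debrunner-Flor lemma and compactness. *)

theory Submission
  imports Defs
begin

section \<open>Maximal monotone operators\<close>

lemma monotone_opD:
  "monotone_op A \<Longrightarrow> u \<in> A x \<Longrightarrow> v \<in> A y \<Longrightarrow> 0 \<le> (u - v) \<bullet> (x - y)"
  unfolding monotone_op_def by blast

lemma maximal_monotone_imp_monotone: "maximal_monotone A \<Longrightarrow> monotone_op A"
  by (simp add: maximal_monotone_def)

lemma maximal_monotone_memI:
  fixes A :: "'a::real_inner \<Rightarrow> 'a set"
  assumes A: "maximal_monotone A"
    and related: "\<And>y v. v \<in> A y \<Longrightarrow> 0 \<le> (u - v) \<bullet> (p - y)"
  shows "u \<in> A p"
proof -
  define A' where "A' = A(p := insert u (A p))"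
  have mono_A: "monotone_op A"
    using A by (rule maximal_monotone_imp_monotone)
  have related': "0 \<le> (v - u) \<bullet> (y - p)" if "v \<in> A y" for y v
    using related[OF that] by (simp add: inner_diff_left inner_diff_right inner_commute)
  have "monotone_op A'"
    unfolding monotone_op_def A'_def
    using monotone_opD[OF mono_A] related related' by auto
  moreover have "\<forall>x. A x \<subseteq> A' x"
    by (auto simp: A'_def)
  ultimately have "A' = A"
    using A by (simp add: maximal_monotone_def)
  then show ?thesis
    by (metis A'_def fun_upd_same insertI1)
qed

lemma maximal_monotone_mem_limit:
  fixes A :: "'a::real_inner \<Rightarrow> 'a set"
  assumes A: "maximal_monotone A"
    and P: "P \<longlonglongrightarrow> p" and U: "U \<longlonglongrightarrow> u" and graph: "\<And>n. U n \<in> A (P n)"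
  shows "u \<in> A p"
proof (rule maximal_monotone_memI[OF A])
  fix y v assume v: "v \<in> A y"
  have "(\<lambda>n. (U n - v) \<bullet> (P n - y)) \<longlonglongrightarrow> (u - v) \<bullet> (p - y)"
    by (intro tendsto_intros P U)
  moreover have "0 \<le> (U n - v) \<bullet> (P n - y)" for n
    using monotone_opD[OF maximal_monotone_imp_monotone[OF A] graph v] .
  ultimately show "0 \<le> (u - v) \<bullet> (p - y)"
    by (intro LIMSEQ_le_const) auto
qed

section \<open>Minty's theorem\<close>

lemma inner_diff_diff_eq_midpoint:
  fixes p a y :: "'a::real_inner"
  shows "(p - a) \<bullet> (p - y) = (norm (p - midpoint a y))\<^sup>2 - (dist a y / 2)\<^sup>2"
proof -
  define h where "h = (1 / 2) *\<^sub>R (a - y)"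
  have "p - a = (p - midpoint a y) - h" and "p - y = (p - midpoint a y) + h"
    by (simp_all add: h_def midpoint_def algebra_simps flip: scaleR_add_left)
  then have "(p - a) \<bullet> (p - y) = ((p - midpoint a y) - h) \<bullet> ((p - midpoint a y) + h)"
    by (simp only:)
  also have "\<dots> = (norm (p - midpoint a y))\<^sup>2 - (norm h)\<^sup>2"
    by (simp add: power2_norm_eq_inner inner_diff_left inner_diff_right inner_add_left
        inner_add_right inner_commute)
  finally show ?thesis
    by (simp add: h_def dist_norm)
qed

lemma inner_diff_nonpos_eq_cball:
  fixes a y :: "'a::real_inner"
  shows "{p. (p - a) \<bullet> (p - y) \<le> 0} = cball (midpoint a y) (dist a y / 2)"
  by (auto simp: inner_diff_diff_eq_midpoint dist_norm norm_minus_commute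
      intro: power2_le_imp_le power_mono)

lemma convex_weights_double_sum_inner_diff:
  fixes a y :: "'i \<Rightarrow> 'a::real_inner"
  assumes "sum c J = 1"
  shows "(\<Sum>i\<in>J. \<Sum>j\<in>J. c i * c j * ((a i - a j) \<bullet> (y i - y j)))
    = 2 * (\<Sum>i\<in>J. c i * (a i \<bullet> y i)) - 2 * ((\<Sum>i\<in>J. c i *\<^sub>R a i) \<bullet> (\<Sum>i\<in>J. c i *\<^sub>R y i))"
proof -
  define S where "S = (\<Sum>i\<in>J. c i * (a i \<bullet> y i))"
  define ab where "ab = (\<Sum>i\<in>J. c i *\<^sub>R a i)"
  define yb where "yb = (\<Sum>i\<in>J. c i *\<^sub>R y i)"
  have "(\<Sum>i\<in>J. \<Sum>j\<in>J. c i * c j * ((a i - a j) \<bullet> (y i - y j)))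
     = (\<Sum>i\<in>J. \<Sum>j\<in>J. c j * (c i * (a i \<bullet> y i)) - (c i *\<^sub>R a i) \<bullet> (c j *\<^sub>R y j)
            - (c j *\<^sub>R a j) \<bullet> (c i *\<^sub>R y i) + c i * (c j * (a j \<bullet> y j)))"
    by (intro sum.cong refl) (simp add: inner_diff_left inner_diff_right algebra_simps)
  also have "\<dots> = S + (\<Sum>i\<in>J. \<Sum>j\<in>J. c i * (c j * (a j \<bullet> y j)))
      - (\<Sum>i\<in>J. \<Sum>j\<in>J. (c i *\<^sub>R a i) \<bullet> (c j *\<^sub>R y j))
      - (\<Sum>i\<in>J. \<Sum>j\<in>J. (c j *\<^sub>R a j) \<bullet> (c i *\<^sub>R y i))"
    by (simp add: S_def sum.distrib sum_subtractf sum_distrib_right[symmetric] assms)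
  also have "(\<Sum>i\<in>J. \<Sum>j\<in>J. c i * (c j * (a j \<bullet> y j))) = S"
    by (simp add: S_def sum_distrib_left[symmetric]) (simp add: sum_distrib_right[symmetric] assms)
  also have "(\<Sum>i\<in>J. \<Sum>j\<in>J. (c i *\<^sub>R a i) \<bullet> (c j *\<^sub>R y j)) = ab \<bullet> yb"
    by (simp only: ab_def yb_def inner_sum_left inner_sum_right) (rule sum.swap)
  also have "(\<Sum>i\<in>J. \<Sum>j\<in>J. (c j *\<^sub>R a j) \<bullet> (c i *\<^sub>R y i)) = ab \<bullet> yb"
    by (simp only: ab_def yb_def inner_sum_left inner_sum_right)
  finally show ?thesis
    by (simp add: S_def ab_def yb_def)
qed

lemma convex_weights_inner_nonpos:
  fixes a y :: "'i \<Rightarrow> 'a::real_inner"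
  assumes c_nonneg: "\<And>i. i \<in> J \<Longrightarrow> 0 \<le> c i" and c_sum: "sum c J = 1"
    and balanced: "(\<Sum>i\<in>J. c i *\<^sub>R (2 *\<^sub>R p - a i - y i)) = 0"
    and antimono: "\<And>i j. i \<in> J \<Longrightarrow> j \<in> J \<Longrightarrow> (a i - a j) \<bullet> (y i - y j) \<le> 0"
  shows "(\<Sum>i\<in>J. c i * ((p - a i) \<bullet> (p - y i))) \<le> 0"
proof -
  define ab where "ab = (\<Sum>i\<in>J. c i *\<^sub>R a i)"
  define yb where "yb = (\<Sum>i\<in>J. c i *\<^sub>R y i)"
  define S where "S = (\<Sum>i\<in>J. c i * (a i \<bullet> y i))"
  have "(\<Sum>i\<in>J. c i *\<^sub>R (2 *\<^sub>R p - a i - y i)) = (\<Sum>i\<in>J. c i) *\<^sub>R (2 *\<^sub>R p) - ab - yb"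
    by (simp add: ab_def yb_def scaleR_diff_right sum_subtractf scaleR_sum_left sum_distrib_right)
  then have p2: "2 *\<^sub>R p = ab + yb"
    using balanced c_sum by (simp add: algebra_simps)
  have "(\<Sum>i\<in>J. c i * ((p - a i) \<bullet> (p - y i)))
      = (\<Sum>i\<in>J. c i * (p \<bullet> p) - p \<bullet> (c i *\<^sub>R y i) - (c i *\<^sub>R a i) \<bullet> p + c i * (a i \<bullet> y i))"
    by (rule sum.cong) (simp_all add: inner_diff_left inner_diff_right algebra_simps)
  also have "\<dots> = p \<bullet> p - p \<bullet> yb - ab \<bullet> p + S"
    by (simp add: sum.distrib sum_subtractf sum_distrib_right[symmetric] c_sum yb_def ab_def S_def
        inner_sum_left inner_sum_right)
  finally have lhs: "(\<Sum>i\<in>J. c i * ((p - a i) \<bullet> (p - y i))) = p \<bullet> p - p \<bullet> yb - ab \<bullet> p + S" .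
  have "(\<Sum>i\<in>J. \<Sum>j\<in>J. c i * c j * ((a i - a j) \<bullet> (y i - y j))) \<le> 0"
    by (intro sum_nonpos mult_nonneg_nonpos mult_nonneg_nonneg c_nonneg antimono)
  then have S_le: "S \<le> ab \<bullet> yb"
    using convex_weights_double_sum_inner_diff[OF c_sum, of a y] by (simp add: S_def ab_def yb_def)
  have "4 * (ab \<bullet> yb) \<le> (ab + yb) \<bullet> (ab + yb)"
    using inner_ge_zero[of "ab - yb"]
    by (simp add: inner_diff_left inner_diff_right inner_add_left inner_add_right inner_commute)
  also have "\<dots> = 4 * (p \<bullet> p)"
    by (simp flip: p2)
  finally have "ab \<bullet> yb \<le> p \<bullet> p"
    by simp
  moreover have "p \<bullet> yb + ab \<bullet> p = 2 * (p \<bullet> p)"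
    using arg_cong[OF p2, of "\<lambda>v. p \<bullet> v"] by (simp add: inner_add_right inner_commute)
  ultimately show ?thesis
    using lhs S_le by linarith
qed

lemma continuous_on_Max_image:
  fixes f :: "'i \<Rightarrow> 'a::topological_space \<Rightarrow> real"
  assumes "finite I" "I \<noteq> {}" "\<And>i. i \<in> I \<Longrightarrow> continuous_on S (f i)"
  shows "continuous_on S (\<lambda>x. Max ((\<lambda>i. f i x) ` I))"
  using assms
proof (induction I rule: finite_ne_induct)
  case (singleton i)
  then show ?case by simp
next
  case (insert i I)
  then show ?case
    by (simp add: Max_insert continuous_on_max)
qed

lemma continuous_coercive_attains_inf:
  fixes f :: "'a::{real_normed_vector,heine_borel} \<Rightarrow> real"
  assumes cont: "continuous_on UNIV f" and coercive: "\<And>q. R < norm q \<Longrightarrow> f 0 < f q"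
  shows "\<exists>p. \<forall>q. f p \<le> f q"
proof -
  have "continuous_on (cball 0 \<bar>R\<bar>) f"
    using cont by (rule continuous_on_subset) simp
  then obtain p where p: "p \<in> cball 0 \<bar>R\<bar>" and p_min: "\<And>q. q \<in> cball 0 \<bar>R\<bar> \<Longrightarrow> f p \<le> f q"
    using continuous_attains_inf[of "cball 0 \<bar>R\<bar>" f] by auto
  have "f p \<le> f q" for q
  proof (cases "norm q \<le> \<bar>R\<bar>")
    case True
    then show ?thesis by (intro p_min) simp
  next
    case False
    then have "f 0 < f q"
      by (intro coercive) simp
    moreover have "f p \<le> f 0"
      by (intro p_min) simp
    ultimately show ?thesis by simp
  qed
  then show ?thesis by blast
qed

lemma Max_inner_diff_attains_inf:
  fixes a y :: "'i \<Rightarrow> 'a::euclidean_space"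
  assumes I: "finite I" "I \<noteq> {}"
  shows "\<exists>p. \<forall>q. Max ((\<lambda>i. (p - a i) \<bullet> (p - y i)) ` I) \<le> Max ((\<lambda>i. (q - a i) \<bullet> (q - y i)) ` I)"
proof -
  obtain i where i: "i \<in> I"
    using I by blast
  define G where "G = Max ((\<lambda>i. (0 - a i) \<bullet> (0 - y i)) ` I)"
  define m where "m = midpoint (a i) (y i)"
  define r where "r = dist (a i) (y i) / 2"
  show ?thesis
  proof (rule continuous_coercive_attains_inf)
    show "continuous_on UNIV (\<lambda>q. Max ((\<lambda>i. (q - a i) \<bullet> (q - y i)) ` I))"
      using I by (intro continuous_on_Max_image continuous_intros)
    fix q :: 'a assume "norm m + sqrt (\<bar>G\<bar> + r\<^sup>2) < norm q"
    then have "sqrt (\<bar>G\<bar> + r\<^sup>2) < sqrt ((norm (q - m))\<^sup>2)"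
      using norm_triangle_ineq2[of q m] by simp
    then have "G < (q - a i) \<bullet> (q - y i)"
      unfolding real_sqrt_less_iff by (simp add: inner_diff_diff_eq_midpoint m_def r_def)
    also have "\<dots> \<le> Max ((\<lambda>i. (q - a i) \<bullet> (q - y i)) ` I)"
      using I i by (intro Max_ge) auto
    finally show "Max ((\<lambda>i. (0 - a i) \<bullet> (0 - y i)) ` I) < Max ((\<lambda>i. (q - a i) \<bullet> (q - y i)) ` I)"
      unfolding G_def .
  qed
qed

lemma eventually_at_right_quadratic_neg:
  fixes a b c :: real
  assumes "c < 0 \<or> (c = 0 \<and> 0 < b)"
  shows "\<forall>\<^sub>F t in at_right 0. c - t * b + t * (t * a) < 0"
  using assms
proof (elim disjE conjE)
  assume "c < 0"
  have "((\<lambda>t. c - t * b + t * (t * a)) \<longlongrightarrow> c - 0 * b + 0 * (0 * a)) (at_right 0)"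
    by (intro tendsto_intros)
  then show ?thesis
    using \<open>c < 0\<close> by (intro order_tendstoD) auto
next
  assume "c = 0" "0 < b"
  have "((\<lambda>t. t * a - b) \<longlongrightarrow> 0 * a - b) (at_right 0)"
    by (intro tendsto_intros)
  then have "\<forall>\<^sub>F t in at_right 0. t * a - b < 0"
    using \<open>0 < b\<close> by (intro order_tendstoD) auto
  with eventually_at_right_less[of 0] show ?thesis
  proof eventually_elim
    case (elim t)
    then have "t * (t * a - b) < 0"
      by (simp add: mult_pos_neg)
    then show ?case
      using \<open>c = 0\<close> by (simp add: algebra_simps)
  qed
qed

lemma Max_inner_diff_minimizer_hull:
  fixes a y :: "'i \<Rightarrow> 'a::euclidean_space" and I :: "'i set"
  defines "g \<equiv> \<lambda>q. Max ((\<lambda>i. (q - a i) \<bullet> (q - y i)) ` I)"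
  assumes I: "finite I" "I \<noteq> {}" and p_min: "\<And>q. g p \<le> g q"
  shows "0 \<in> convex hull ((\<lambda>i. 2 *\<^sub>R p - a i - y i) ` {i \<in> I. (p - a i) \<bullet> (p - y i) = g p})"
proof (rule ccontr)
  define h where "h i q = (q - a i) \<bullet> (q - y i)" for i q
  define J where "J = {i \<in> I. h i p = g p}"
  define v where "v i = 2 *\<^sub>R p - a i - y i" for i
  assume "\<not> ?thesis"
  then have "0 \<notin> convex hull (v ` J)"
    by (simp add: v_def J_def h_def)
  moreover have "closed (convex hull (v ` J))"
    using I(1)
    by (intro compact_imp_closed compact_convex_hull finite_imp_compact) (simp add: J_def)
  ultimately obtain w b where "w \<bullet> 0 < b" "\<forall>x\<in>convex hull (v ` J). b < w \<bullet> x"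
    using separating_hyperplane_closed_point[of "convex hull (v ` J)" 0] by auto
  then have descent: "0 < w \<bullet> v i" if "i \<in> J" for i
    using that hull_inc[of "v i" "v ` J"] by fastforce
  have h_le_g: "h i q \<le> g q" if "i \<in> I" for i q
    unfolding g_def h_def using I(1) that by (intro Max_ge) auto
  have expand: "h i (p - t *\<^sub>R w) - g p = (h i p - g p) - t * (w \<bullet> v i) + t * (t * (w \<bullet> w))" for i t
    by (simp add: h_def v_def inner_diff_left inner_diff_right inner_commute scaleR_2 algebra_simps)
  have "\<forall>\<^sub>F t in at_right 0. h i (p - t *\<^sub>R w) < g p" if "i \<in> I" for i
  proof -
    have "h i p - g p < 0 \<or> (h i p - g p = 0 \<and> 0 < w \<bullet> v i)"
      using h_le_g[OF that, of p] descent[of i] that by (auto simp: J_def)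
    from eventually_at_right_quadratic_neg[OF this, of "w \<bullet> w"] show ?thesis
      by eventually_elim (simp add: flip: expand)
  qed
  then have "\<forall>\<^sub>F t in at_right 0. \<forall>i\<in>I. h i (p - t *\<^sub>R w) < g p"
    using I(1) by (intro eventually_ball_finite) auto
  then obtain t where t: "\<forall>i\<in>I. h i (p - t *\<^sub>R w) < g p"
    using eventually_happens trivial_limit_at_right_real by blast
  have "g (p - t *\<^sub>R w) \<in> (\<lambda>i. h i (p - t *\<^sub>R w)) ` I"
    unfolding g_def h_def using I by (intro Max_in) auto
  then show False
    using t p_min[of "p - t *\<^sub>R w"] by fastforce
qed

text \<open>Debrunner-Flor lemma for finitely many pairs: at a minimiser \<open>p\<close> of the maximum of the
  quadratics \<open>(p - a i) \<bullet> (p - y i)\<close>, zero is a convex combination of the gradients of the active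
  ones, and antimonotonicity makes the same combination of their values nonpositive.\<close>

lemma finite_antimonotone_common_point:
  fixes a y :: "'i \<Rightarrow> 'a::euclidean_space"
  assumes I: "finite I"
    and antimono: "\<And>i j. i \<in> I \<Longrightarrow> j \<in> I \<Longrightarrow> (a i - a j) \<bullet> (y i - y j) \<le> 0"
  shows "\<exists>p. \<forall>i\<in>I. (p - a i) \<bullet> (p - y i) \<le> 0"
proof (cases "I = {}")
  case True
  then show ?thesis by simp
next
  case False
  define g where "g q = Max ((\<lambda>i. (q - a i) \<bullet> (q - y i)) ` I)" for q
  obtain p where p_min: "\<And>q. g p \<le> g q"
    using Max_inner_diff_attains_inf[OF I False, of a y] unfolding g_def by blast
  define J where "J = {i \<in> I. (p - a i) \<bullet> (p - y i) = g p}"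
  have "0 \<in> convex hull ((\<lambda>i. 2 *\<^sub>R p - a i - y i) ` J)"
    using Max_inner_diff_minimizer_hull[where a = a and y = y and p = p, OF I False] p_min
    unfolding g_def J_def by simp
  moreover have "(\<lambda>i. 2 *\<^sub>R p - a i - y i) ` J = (\<Union>i\<in>J. {2 *\<^sub>R p - a i - y i})"
    by auto
  ultimately have "0 \<in> convex hull (\<Union>i\<in>J. {2 *\<^sub>R p - a i - y i})"
    by simp
  then obtain c u where c: "\<forall>i\<in>J. 0 \<le> c i" "sum c J = 1"
    and balanced: "(\<Sum>i\<in>J. c i *\<^sub>R u i) = 0" and u: "\<forall>i\<in>J. u i = 2 *\<^sub>R p - a i - y i"
    using I by (subst (asm) convex_hull_finite_union) (auto simp: J_def)
  have "g p = (\<Sum>i\<in>J. c i * ((p - a i) \<bullet> (p - y i)))"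
    using c(2) by (simp add: J_def sum_distrib_right[symmetric])
  also have "\<dots> \<le> 0"
    using c balanced u antimono by (intro convex_weights_inner_nonpos) (auto simp: J_def)
  finally have "g p \<le> 0" .
  moreover have "(p - a i) \<bullet> (p - y i) \<le> g p" if "i \<in> I" for i
    unfolding g_def using I that by (intro Max_ge) auto
  ultimately show ?thesis
    by (meson order_trans)
qed

lemma antimonotone_common_point:
  fixes a y :: "'i \<Rightarrow> 'a::euclidean_space"
  assumes antimono: "\<And>i j. i \<in> I \<Longrightarrow> j \<in> I \<Longrightarrow> (a i - a j) \<bullet> (y i - y j) \<le> 0"
  shows "\<exists>p. \<forall>i\<in>I. (p - a i) \<bullet> (p - y i) \<le> 0"
proof (cases "I = {}")
  case True
  then show ?thesis by simp
next
  case False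
  then obtain i0 where i0: "i0 \<in> I" by blast
  define T where "T i = {p. (p - a i) \<bullet> (p - y i) \<le> 0}" for i
  have "T i0 \<inter> (\<Inter>i\<in>I. T i) \<noteq> {}"
  proof (rule compact_imp_fip_image)
    show "compact (T i0)" and "closed (T i)" for i
      by (simp_all add: T_def inner_diff_nonpos_eq_cball)
  next
    fix I' assume I': "finite I'" "I' \<subseteq> I"
    then obtain p where "\<forall>i\<in>insert i0 I'. (p - a i) \<bullet> (p - y i) \<le> 0"
      using finite_antimonotone_common_point[of "insert i0 I'" a y] i0 antimono by blast
    then show "T i0 \<inter> (\<Inter>i\<in>I'. T i) \<noteq> {}"
      by (auto simp: T_def)
  qed
  then show ?thesis
    by (auto simp: T_def)
qed

theorem Minty_theorem:
  fixes A :: "'a::euclidean_space \<Rightarrow> 'a set"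
  assumes A: "maximal_monotone A" and l: "0 < l"
  shows "\<exists>p. \<exists>u\<in>A p. p + l *\<^sub>R u = z"
proof -
  define G where "G = {(y, v). v \<in> A y}"
  have "((z - l *\<^sub>R v) - (z - l *\<^sub>R v')) \<bullet> (y - y') \<le> 0"
    if "(y, v) \<in> G" "(y', v') \<in> G" for y v y' v'
  proof -
    have "0 \<le> l * ((v - v') \<bullet> (y - y'))"
      using monotone_opD[OF maximal_monotone_imp_monotone[OF A]] that l by (simp add: G_def)
    then show ?thesis
      by (simp add: algebra_simps flip: scaleR_diff_right)
  qed
  then obtain p where p: "\<forall>(y, v)\<in>G. (p - (z - l *\<^sub>R v)) \<bullet> (p - y) \<le> 0"
    using antimonotone_common_point[of G "\<lambda>(y, v). z - l *\<^sub>R v" fst] by fastforce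
  have "(1 / l) *\<^sub>R (z - p) \<in> A p"
  proof (rule maximal_monotone_memI[OF A])
    fix y v assume "v \<in> A y"
    moreover have "(1 / l) *\<^sub>R (z - p) - v = (- 1 / l) *\<^sub>R (p - (z - l *\<^sub>R v))"
      using l by (simp add: algebra_simps)
    ultimately show "0 \<le> ((1 / l) *\<^sub>R (z - p) - v) \<bullet> (p - y)"
      using p l unfolding G_def by (simp add: mult_le_0_iff divide_le_0_iff)
  qed
  moreover have "p + l *\<^sub>R ((1 / l) *\<^sub>R (z - p)) = z"
    using l by simp
  ultimately show ?thesis
    by blast
qed

section \<open>Resolvents\<close>

lemma resolvent_eqI:
  fixes A :: "'a::real_inner \<Rightarrow> 'a set"
  assumes mono_A: "monotone_op A" and l: "0 \<le> l" and u: "u \<in> A p" and z: "p + l *\<^sub>R u = z"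
  shows "resolvent l A z = p"
  unfolding resolvent_def
proof (rule the_equality)
  show "\<exists>u\<in>A p. p + l *\<^sub>R u = z"
    using u z by blast
next
  fix q assume "\<exists>v\<in>A q. q + l *\<^sub>R v = z"
  then obtain v where v: "v \<in> A q" "q + l *\<^sub>R v = z" by blast
  have "p - q = l *\<^sub>R (v - u)"
    using z v(2) by (simp add: algebra_simps)
  then have "(p - q) \<bullet> (p - q) = (l *\<^sub>R (v - u)) \<bullet> (p - q)"
    by (rule arg_cong)
  also have "\<dots> = - (l * ((v - u) \<bullet> (q - p)))"
    by (simp add: inner_diff_right algebra_simps)
  also have "\<dots> \<le> 0"
    using monotone_opD[OF mono_A v(1) u] l by simp
  finally show "q = p"
    by (metis inner_gt_zero_iff not_le right_minus_eq)
qed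

lemma resolvent_mem:
  fixes A :: "'a::euclidean_space \<Rightarrow> 'a set"
  assumes A: "maximal_monotone A" and l: "0 < l"
  shows "(1 / l) *\<^sub>R (z - resolvent l A z) \<in> A (resolvent l A z)"
proof -
  obtain p u where u: "u \<in> A p" "p + l *\<^sub>R u = z"
    using Minty_theorem[OF A l] by blast
  then have "resolvent l A z = p"
    using maximal_monotone_imp_monotone[OF A] l by (intro resolvent_eqI) auto
  moreover have "u = (1 / l) *\<^sub>R (z - p)"
    using u(2) l by (auto simp: algebra_simps)
  ultimately show ?thesis
    using u(1) by simp
qed

lemma resolvent_nonexpansive:
  fixes A :: "'a::euclidean_space \<Rightarrow> 'a set"
  assumes A: "maximal_monotone A" and l: "0 < l"
  shows "norm (resolvent l A z - resolvent l A z') \<le> norm (z - z')"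
proof -
  define d where "d = resolvent l A z - resolvent l A z'"
  define e where "e = (1 / l) *\<^sub>R (z - resolvent l A z) - (1 / l) *\<^sub>R (z' - resolvent l A z')"
  have "0 \<le> e \<bullet> d"
    unfolding d_def e_def
    by (intro monotone_opD[OF maximal_monotone_imp_monotone[OF A]] resolvent_mem[OF A l])
  have "z - z' = d + l *\<^sub>R e"
    using l by (simp add: d_def e_def algebra_simps)
  then have "(norm (z - z'))\<^sup>2 = (norm d)\<^sup>2 + 2 * l * (e \<bullet> d) + (l * norm e)\<^sup>2"
    by (simp only: power2_norm_eq_inner power_mult_distrib inner_add_left inner_add_right
        inner_scaleR_left inner_scaleR_right inner_commute[of d e])
      (simp add: power2_eq_square algebra_simps)
  also have "\<dots> \<ge> (norm d)\<^sup>2"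
    using \<open>0 \<le> e \<bullet> d\<close> l by simp
  finally show ?thesis
    unfolding d_def by (rule power2_le_imp_le) simp
qed

lemma resolvent_fixed_point:
  assumes "monotone_op A" "0 \<le> l" "- B z \<in> A z"
  shows "resolvent l A (z - l *\<^sub>R B z) = z"
  using assms by (intro resolvent_eqI[where u = "- B z"]) auto

section \<open>The forward-reflected-backward iteration\<close>

lemma zeros_sum_iff: "z \<in> zeros_sum A B \<longleftrightarrow> - B z \<in> A z"
  by (auto simp: zeros_sum_def add_eq_0_iff2)

text \<open>\<open>x_prev k\<close> and \<open>lam_prev k\<close> stand for \<open>x\<^sub>k\<^sub>-\<^sub>1\<close> and \<open>\<lambda>\<^sub>k\<^sub>-\<^sub>1\<close>: only their values at 0,
  the initial data \<open>x\<^sub>-\<^sub>1\<close> and \<open>\<lambda>\<^sub>-\<^sub>1\<close>, are free.\<close>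

locale forward_reflected_backward =
  fixes A :: "'a::euclidean_space \<Rightarrow> 'a set" and B :: "'a \<Rightarrow> 'a" and \<delta> :: real
    and x x_prev :: "nat \<Rightarrow> 'a" and lam lam_prev :: "nat \<Rightarrow> real"
  assumes maximal_monotone_A: "maximal_monotone A"
    and monotone_B: "monotone_fun B"
    and delta: "0 < \<delta>" "\<delta> < 1"
    and lam_pos: "\<And>k. 0 < lam k"
    and lam_prev_Suc: "\<And>k. lam_prev (Suc k) = lam k"
    and x_prev_Suc: "\<And>k. x_prev (Suc k) = x k"
    and iterate: "\<And>k. x (Suc k) = resolvent (lam k) A
      (x k - lam k *\<^sub>R B (x k) - lam_prev k *\<^sub>R (B (x k) - B (x_prev k)))"
    and accepted: "\<And>k. lam k * norm (B (x (Suc k)) - B (x k)) \<le> \<delta> / 2 * norm (x (Suc k) - x k)"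
begin

definition trial_point :: "nat \<Rightarrow> real \<Rightarrow> 'a" where
  "trial_point k l = resolvent l A (x k - l *\<^sub>R B (x k) - lam_prev k *\<^sub>R (B (x k) - B (x_prev k)))"

definition acceptable :: "nat \<Rightarrow> real \<Rightarrow> bool" where
  "acceptable k l \<longleftrightarrow> l * norm (B (trial_point k l) - B (x k)) \<le> \<delta> / 2 * norm (trial_point k l - x k)"

definition A_selection :: "nat \<Rightarrow> 'a" where
  "A_selection k = (1 / lam k) *\<^sub>R
     (x k - lam k *\<^sub>R B (x k) - lam_prev k *\<^sub>R (B (x k) - B (x_prev k)) - x (Suc k))"

lemma A_selection_mem: "A_selection k \<in> A (x (Suc k))"
  unfolding A_selection_def iterate[of k] by (intro resolvent_mem maximal_monotone_A lam_pos)

lemma scaleR_A_selection: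
  "lam k *\<^sub>R A_selection k
    = x k - x (Suc k) - lam k *\<^sub>R B (x k) - lam_prev k *\<^sub>R (B (x k) - B (x_prev k))"
  using lam_pos[of k] by (simp add: A_selection_def algebra_simps)

lemma B_step_inner_le:
  "\<bar>2 * lam n * ((B (x (Suc n)) - B (x n)) \<bullet> v)\<bar> \<le> \<delta> * norm (x (Suc n) - x n) * norm v"
proof -
  have "\<bar>2 * lam n * ((B (x (Suc n)) - B (x n)) \<bullet> v)\<bar>
      \<le> 2 * (lam n * norm (B (x (Suc n)) - B (x n))) * norm v"
    using Cauchy_Schwarz_ineq2 lam_pos[of n] by (simp add: abs_mult mult.assoc mult_left_mono)
  also have "\<dots> \<le> 2 * (\<delta> / 2 * norm (x (Suc n) - x n)) * norm v"
    using accepted delta by (intro mult_right_mono mult_left_mono) auto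
  finally show ?thesis
    by simp
qed

lemma B_step_inner_le_squares:
  "\<bar>2 * lam n * ((B (x (Suc n)) - B (x n)) \<bullet> v)\<bar>
    \<le> \<delta> / 2 * ((norm (x (Suc n) - x n))\<^sup>2 + (norm v)\<^sup>2)"
proof -
  have "\<delta> * norm (x (Suc n) - x n) * norm v \<le> \<delta> / 2 * ((norm (x (Suc n) - x n))\<^sup>2 + (norm v)\<^sup>2)"
    using mult_left_mono[OF sum_squares_bound[of "norm (x (Suc n) - x n)" "norm v"], of "\<delta> / 2"]
      delta by simp
  then show ?thesis
    using B_step_inner_le[of n v] by linarith
qed

definition energy :: "'a \<Rightarrow> nat \<Rightarrow> real" where
  "energy z n = (norm (x (Suc n) - z))\<^sup>2 - 2 * lam n * ((B (x (Suc n)) - B (x n)) \<bullet> (x (Suc n) - z))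
     + \<delta> / 2 * (norm (x (Suc n) - x n))\<^sup>2"

lemma energy_lower_bound: "(1 - \<delta> / 2) * (norm (x (Suc n) - z))\<^sup>2 \<le> energy z n"
  using abs_le_D1[OF B_step_inner_le_squares[of n "x (Suc n) - z"]]
  unfolding energy_def by (simp add: algebra_simps)

lemma energy_decrease:
  assumes z: "- B z \<in> A z"
  shows "energy z (Suc n) + (1 - \<delta>) * (norm (x (Suc (Suc n)) - x (Suc n)))\<^sup>2 \<le> energy z n"
proof -
  define d where "d = x (Suc (Suc n)) - x (Suc n)"
  define e where "e = x (Suc n) - z"
  define P where "P k = B (x (Suc k)) - B (x k)" for k
  have "0 \<le> lam (Suc n) * ((A_selection (Suc n) - - B z) \<bullet> (x (Suc (Suc n)) - z))
      + lam (Suc n) * ((B (x (Suc (Suc n))) - B z) \<bullet> (x (Suc (Suc n)) - z))"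
    using monotone_opD[OF maximal_monotone_imp_monotone[OF maximal_monotone_A] A_selection_mem z]
      monotone_B lam_pos[of "Suc n"] by (simp add: monotone_fun_def)
  also have "\<dots> = (lam (Suc n) *\<^sub>R A_selection (Suc n) + lam (Suc n) *\<^sub>R B (x (Suc (Suc n))))
      \<bullet> (d + e)"
    by (simp add: d_def e_def inner_add_left inner_diff_left algebra_simps)
  also have "lam (Suc n) *\<^sub>R A_selection (Suc n) + lam (Suc n) *\<^sub>R B (x (Suc (Suc n)))
      = - d + lam (Suc n) *\<^sub>R P (Suc n) - lam n *\<^sub>R P n"
    unfolding scaleR_A_selection by (simp add: d_def P_def lam_prev_Suc x_prev_Suc algebra_simps)
  finally have monotone_step: "0 \<le> (- d + lam (Suc n) *\<^sub>R P (Suc n) - lam n *\<^sub>R P n) \<bullet> (d + e)" .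
  have cross: "- (2 * lam n * (P n \<bullet> d)) \<le> \<delta> / 2 * ((norm (x (Suc n) - x n))\<^sup>2 + (norm d)\<^sup>2)"
    using abs_le_D2[OF B_step_inner_le_squares[of n d]] unfolding P_def by linarith
  have "x (Suc (Suc n)) - z = d + e"
    by (simp add: d_def e_def)
  then have "energy z (Suc n)
      = d \<bullet> d + 2 * (d \<bullet> e) + e \<bullet> e - 2 * lam (Suc n) * (P (Suc n) \<bullet> (d + e)) + \<delta> / 2 * (d \<bullet> d)"
    unfolding energy_def d_def[symmetric] P_def[symmetric]
    by (simp add: power2_norm_eq_inner inner_add_left inner_add_right inner_commute)
  moreover have "energy z n = e \<bullet> e - 2 * lam n * (P n \<bullet> e) + \<delta> / 2 * (norm (x (Suc n) - x n))\<^sup>2"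
    by (simp add: energy_def e_def P_def power2_norm_eq_inner)
  ultimately show ?thesis
    using monotone_step cross
    by (simp add: d_def[symmetric] power2_norm_eq_inner inner_add_left inner_add_right
        inner_diff_left inner_commute algebra_simps)
qed

lemma energy_nonneg: "0 \<le> energy z n"
proof -
  have "0 \<le> (1 - \<delta> / 2) * (norm (x (Suc n) - z))\<^sup>2"
    using delta by (intro mult_nonneg_nonneg) auto
  then show ?thesis
    using energy_lower_bound[of n z] by linarith
qed

lemma energy_decseq:
  assumes z: "- B z \<in> A z"
  shows "decseq (energy z)"
proof (rule decseq_SucI)
  fix n
  have "0 \<le> (1 - \<delta>) * (norm (x (Suc (Suc n)) - x (Suc n)))\<^sup>2"
    using delta by (intro mult_nonneg_nonneg) auto
  then show "energy z (Suc n) \<le> energy z n"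
    using energy_decrease[OF z, of n] by linarith
qed

lemma steps_tendsto_zero:
  assumes z: "- B z \<in> A z"
  shows "(\<lambda>n. x (Suc n) - x n) \<longlonglongrightarrow> 0"
proof -
  obtain E where E: "energy z \<longlonglongrightarrow> E"
    using energy_decseq[OF z] energy_nonneg decseq_convergent by blast
  have "(\<lambda>n. (norm (x (Suc (Suc n)) - x (Suc n)))\<^sup>2) \<longlonglongrightarrow> 0"
  proof (rule Lim_null_comparison)
    show "\<forall>\<^sub>F n in sequentially. norm ((norm (x (Suc (Suc n)) - x (Suc n)))\<^sup>2)
        \<le> (energy z n - energy z (Suc n)) / (1 - \<delta>)"
      using energy_decrease[OF z] delta by (intro always_eventually allI) (simp add: field_simps)
    have "(\<lambda>n. (energy z n - energy z (Suc n)) / (1 - \<delta>)) \<longlonglongrightarrow> (E - E) / (1 - \<delta>)"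
      by (intro tendsto_intros E LIMSEQ_Suc) (use delta in simp)
    then show "(\<lambda>n. (energy z n - energy z (Suc n)) / (1 - \<delta>)) \<longlonglongrightarrow> 0"
      by simp
  qed
  then have "(\<lambda>n. sqrt ((norm (x (Suc (Suc n)) - x (Suc n)))\<^sup>2)) \<longlonglongrightarrow> sqrt 0"
    by (intro tendsto_intros)
  then have "(\<lambda>n. x (Suc (Suc n)) - x (Suc n)) \<longlonglongrightarrow> 0"
    by (simp add: tendsto_norm_zero_iff)
  then show ?thesis
    by (rule LIMSEQ_imp_Suc)
qed

lemma iterates_bounded:
  assumes z: "- B z \<in> A z"
  shows "bounded (range x)"
proof -
  have "(1 - \<delta> / 2) * (norm (x (Suc n) - z))\<^sup>2 \<le> energy z 0" for n
    using energy_lower_bound[of n z] decseqD[OF energy_decseq[OF z], of 0 n] by simp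
  then have "norm (x (Suc n) - z) \<le> sqrt (energy z 0 / (1 - \<delta> / 2))" for n
    using delta by (intro real_le_rsqrt) (simp add: pos_le_divide_eq mult.commute)
  then have "norm (x (Suc n)) \<le> norm z + sqrt (energy z 0 / (1 - \<delta> / 2))" for n
    using norm_triangle_sub[of "x (Suc n)" z] by (smt (verit))
  then have "bounded (range (\<lambda>n. x (Suc n)))"
    by (auto intro!: boundedI)
  then show ?thesis
    by (simp flip: Bseq_eq_bounded add: Bseq_Suc_iff)
qed

lemma dist_convergent:
  assumes z: "- B z \<in> A z"
  shows "convergent (\<lambda>n. dist (x n) z)"
proof -
  obtain E where E: "energy z \<longlonglongrightarrow> E"
    using energy_decseq[OF z] energy_nonneg decseq_convergent by blast
  obtain K where K: "\<And>n. norm (x n) \<le> K"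
    using iterates_bounded[OF z] by (auto simp: bounded_iff)
  have steps: "(\<lambda>n. norm (x (Suc n) - x n)) \<longlonglongrightarrow> 0"
    using steps_tendsto_zero[OF z] by (simp add: tendsto_norm_zero_iff)
  have "(\<lambda>n. 2 * lam n * ((B (x (Suc n)) - B (x n)) \<bullet> (x (Suc n) - z))) \<longlonglongrightarrow> 0"
  proof (rule Lim_null_comparison)
    have "\<delta> * norm (x (Suc n) - x n) * norm (x (Suc n) - z)
        \<le> \<delta> * norm (x (Suc n) - x n) * (K + norm z)" for n
      using delta K[of "Suc n"] norm_triangle_ineq4[of "x (Suc n)" z] by (intro mult_left_mono) auto
    then show "\<forall>\<^sub>F n in sequentially.
        norm (2 * lam n * ((B (x (Suc n)) - B (x n)) \<bullet> (x (Suc n) - z)))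
          \<le> \<delta> * norm (x (Suc n) - x n) * (K + norm z)"
      unfolding real_norm_def using B_step_inner_le
      by (intro always_eventually allI) (meson order_trans)
    show "(\<lambda>n. \<delta> * norm (x (Suc n) - x n) * (K + norm z)) \<longlonglongrightarrow> 0"
      by (intro tendsto_mult_left_zero tendsto_mult_right_zero steps)
  qed
  then have "(\<lambda>n. energy z n + 2 * lam n * ((B (x (Suc n)) - B (x n)) \<bullet> (x (Suc n) - z))
      - \<delta> / 2 * (norm (x (Suc n) - x n))\<^sup>2) \<longlonglongrightarrow> E + 0 - \<delta> / 2 * 0\<^sup>2"
    by (intro tendsto_intros E steps)
  then have "(\<lambda>n. (norm (x (Suc n) - z))\<^sup>2) \<longlonglongrightarrow> E"
    by (simp add: energy_def)
  then have "(\<lambda>n. sqrt ((norm (x (Suc n) - z))\<^sup>2)) \<longlonglongrightarrow> sqrt E"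
    by (intro tendsto_intros)
  then have "(\<lambda>n. dist (x (Suc n)) z) \<longlonglongrightarrow> sqrt E"
    by (simp add: dist_norm)
  then show ?thesis
    by (rule convergentI[OF LIMSEQ_imp_Suc])
qed

lemma reflection_terms_bounded:
  assumes z: "- B z \<in> A z"
  shows "bounded (range (\<lambda>k. lam_prev k *\<^sub>R (B (x k) - B (x_prev k))))"
proof -
  obtain K where K: "\<And>j. norm (x (Suc j) - x j) \<le> K"
    using convergent_imp_Bseq[OF convergentI[OF steps_tendsto_zero[OF z]]] by (auto simp: Bseq_def)
  have "norm (lam_prev (Suc j) *\<^sub>R (B (x (Suc j)) - B (x_prev (Suc j)))) \<le> \<delta> / 2 * K" for j
    using accepted[of j] lam_pos[of j] delta K[of j]
    by (simp add: lam_prev_Suc x_prev_Suc) (smt (verit) mult_left_mono)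
  then have "Bseq (\<lambda>j. lam_prev (Suc j) *\<^sub>R (B (x (Suc j)) - B (x_prev (Suc j))))"
    by (rule BseqI')
  then have "Bseq (\<lambda>k. lam_prev k *\<^sub>R (B (x k) - B (x_prev k)))"
    using Bseq_Suc_iff[of "\<lambda>k. lam_prev k *\<^sub>R (B (x k) - B (x_prev k))"] by simp
  then show ?thesis
    by (simp add: Bseq_eq_bounded)
qed

lemma trial_point_dist_le:
  assumes z: "- B z \<in> A z" and l: "0 < l"
  shows "norm (trial_point k l - z)
    \<le> norm (x k - z) + l * norm (B (x k) - B z) + norm (lam_prev k *\<^sub>R (B (x k) - B (x_prev k)))"
proof -
  define R where "R = lam_prev k *\<^sub>R (B (x k) - B (x_prev k))"
  have "resolvent l A (z - l *\<^sub>R B z) = z"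
    using maximal_monotone_imp_monotone[OF maximal_monotone_A] l z
    by (intro resolvent_fixed_point) auto
  then have "norm (trial_point k l - z) = norm (trial_point k l - resolvent l A (z - l *\<^sub>R B z))"
    by simp
  also have "\<dots> \<le> norm ((x k - l *\<^sub>R B (x k) - R) - (z - l *\<^sub>R B z))"
    unfolding trial_point_def R_def by (rule resolvent_nonexpansive[OF maximal_monotone_A l])
  also have "(x k - l *\<^sub>R B (x k) - R) - (z - l *\<^sub>R B z) = (x k - z) - l *\<^sub>R (B (x k) - B z) - R"
    by (simp add: algebra_simps)
  also have "norm \<dots> \<le> norm (x k - z) + norm (l *\<^sub>R (B (x k) - B z)) + norm R"
    by (rule order_trans[OF norm_triangle_ineq4 add_right_mono[OF norm_triangle_ineq4]])
  finally show ?thesis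
    using l by (simp add: R_def)
qed

lemma residual_le:
  "lam (Suc k) * norm (A_selection (Suc k) + B (x (Suc (Suc k))))
    \<le> (1 + \<delta> / 2) * norm (x (Suc (Suc k)) - x (Suc k)) + \<delta> / 2 * norm (x (Suc k) - x k)"
proof -
  have "lam (Suc k) * norm (A_selection (Suc k) + B (x (Suc (Suc k))))
      = norm (lam (Suc k) *\<^sub>R (A_selection (Suc k) + B (x (Suc (Suc k)))))"
    using lam_pos[of "Suc k"] by simp
  also have "lam (Suc k) *\<^sub>R (A_selection (Suc k) + B (x (Suc (Suc k))))
      = (x (Suc k) - x (Suc (Suc k))) + lam (Suc k) *\<^sub>R (B (x (Suc (Suc k))) - B (x (Suc k)))
        - lam k *\<^sub>R (B (x (Suc k)) - B (x k))"
    by (simp add: scaleR_add_right scaleR_A_selection lam_prev_Suc x_prev_Suc algebra_simps)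
  also have "norm \<dots> \<le> norm (x (Suc k) - x (Suc (Suc k)))
      + norm (lam (Suc k) *\<^sub>R (B (x (Suc (Suc k))) - B (x (Suc k))))
      + norm (lam k *\<^sub>R (B (x (Suc k)) - B (x k)))"
    by (rule order_trans[OF norm_triangle_ineq4 add_right_mono[OF norm_triangle_ineq]])
  also have "\<dots> = norm (x (Suc (Suc k)) - x (Suc k))
      + lam (Suc k) * norm (B (x (Suc (Suc k))) - B (x (Suc k)))
      + lam k * norm (B (x (Suc k)) - B (x k))"
    using lam_pos[of k] lam_pos[of "Suc k"] by (simp add: norm_minus_commute)
  also have "\<dots> \<le> (1 + \<delta> / 2) * norm (x (Suc (Suc k)) - x (Suc k)) + \<delta> / 2 * norm (x (Suc k) - x k)"
    using accepted[of k] accepted[of "Suc k"] by (simp add: algebra_simps)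
  finally show ?thesis .
qed

end

section \<open>Backtracking line search\<close>

lemma locally_lipschitz_isCont:
  assumes "locally_lipschitz B"
  shows "isCont B y"
proof -
  obtain U L where U: "open U" "y \<in> U" "L-lipschitz_on U B"
    using assms unfolding locally_lipschitz_def by blast
  then show ?thesis
    using lipschitz_on_continuous_on continuous_on_eq_continuous_at by blast
qed

lemma locally_lipschitz_compact:
  fixes B :: "'a::metric_space \<Rightarrow> 'b::metric_space"
  assumes B: "locally_lipschitz B" and K: "compact K"
  obtains L where "L-lipschitz_on K B"
proof -
  have "local_lipschitz {0::real} K (\<lambda>_. B)"
  proof (rule local_lipschitzI)
    fix t y assume "t \<in> {0::real}" "y \<in> K"
    obtain U L where U: "open U" "y \<in> U" "L-lipschitz_on U B"
      using B unfolding locally_lipschitz_def by blast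
    obtain e where e: "0 < e" "ball y e \<subseteq> U"
      using U(1,2) openE by blast
    have "L-lipschitz_on (cball y (e / 2) \<inter> K) B"
      using e by (intro lipschitz_on_subset[OF U(3)]) (auto simp: subset_iff)
    then show "\<exists>u>0. \<exists>L. \<forall>t\<in>cball t u \<inter> {0}. L-lipschitz_on (cball y u \<inter> K) B"
      using e by (intro exI[of _ "e / 2"]) auto
  qed
  from local_lipschitz_compact_implies_lipschitz[OF this K compact_sing] that show ?thesis
    by auto
qed

lemma lipschitz_on_rejected_step:
  assumes "L-lipschitz_on S B" "p \<in> S" "y \<in> S" "0 \<le> l"
    and rejected: "\<delta> / 2 * norm (p - y) < l * norm (B p - B y)"
  shows "\<delta> / 2 < l * L"
proof -
  note rejected
  also have "\<dots> \<le> l * (L * norm (p - y))"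
    using lipschitz_onD[OF assms(1-3)] assms(4) by (simp add: dist_norm mult_left_mono)
  finally have "\<delta> / 2 * norm (p - y) < (l * L) * norm (p - y)"
    by (simp add: mult.assoc)
  then show ?thesis
    by (rule mult_right_less_imp_less) simp
qed

lemma tendsto_if_subseq_tendsto_dist_convergent:
  assumes r: "strict_mono r" and sub: "(x \<circ> r) \<longlonglongrightarrow> z" and dist: "convergent (\<lambda>n. dist (x n) z)"
  shows "x \<longlonglongrightarrow> z"
proof -
  obtain c where c: "(\<lambda>n. dist (x n) z) \<longlonglongrightarrow> c"
    using dist by (auto simp: convergent_def)
  have "(\<lambda>n. dist (x (r n)) z) \<longlonglongrightarrow> c"
    using LIMSEQ_subseq_LIMSEQ[OF c r] by (simp add: o_def)
  moreover have "(\<lambda>n. dist (x (r n)) z) \<longlonglongrightarrow> 0"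
    using tendsto_dist_iff[THEN iffD1, OF sub] by (simp add: o_def)
  ultimately have "c = 0"
    by (rule LIMSEQ_unique)
  then show ?thesis
    using c by (simp add: tendsto_dist_iff[of x z])
qed

locale forward_reflected_backward_linesearch = forward_reflected_backward +
  fixes \<sigma> :: real and \<rho> :: "nat \<Rightarrow> real" and i :: "nat \<Rightarrow> nat"
  assumes locally_lipschitz_B: "locally_lipschitz B"
    and solvable: "zeros_sum A B \<noteq> {}"
    and sigma: "0 < \<sigma>" "\<sigma> < 1"
    and rho_ge: "\<And>k. 1 \<le> \<rho> k"
    and lam_eq: "\<And>k. lam k = \<rho> k * lam_prev k * \<sigma> ^ i k"
    and backtracked: "\<And>k j. j < i k \<Longrightarrow> \<not> acceptable k (\<rho> k * lam_prev k * \<sigma> ^ j)"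
begin

lemma solvableE:
  obtains z where "- B z \<in> A z"
  using solvable zeros_sum_iff by blast

lemma lam_prev_pos: "0 < lam_prev k"
proof (cases k)
  case 0
  have "0 < \<rho> 0 * lam_prev 0 * \<sigma> ^ i 0"
    using lam_pos[of 0] lam_eq[of 0] by simp
  then show ?thesis
    using 0 rho_ge[of 0] sigma by (simp add: zero_less_mult_iff)
next
  case (Suc j)
  then show ?thesis
    by (simp add: lam_prev_Suc lam_pos)
qed

lemma B_iterates_bounded: "bounded (range (\<lambda>k. B (x k)))"
proof -
  obtain z where z: "- B z \<in> A z"
    by (rule solvableE)
  obtain c r where "range x \<subseteq> cball c r"
    using iterates_bounded[OF z] unfolding bounded_subset_cball by blast
  then have "range (\<lambda>k. B (x k)) \<subseteq> B ` cball c r"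
    by auto
  moreover have "bounded (B ` cball c r)"
    using locally_lipschitz_isCont[OF locally_lipschitz_B]
    by (intro compact_imp_bounded compact_continuous_image continuous_at_imp_continuous_on) auto
  ultimately show ?thesis
    using bounded_subset by blast
qed

lemma trial_points_bounded: "bounded {trial_point k l |k l. 0 < l \<and> l \<le> \<Lambda>}"
proof -
  obtain z where z: "- B z \<in> A z"
    by (rule solvableE)
  obtain Kx KB KR where K: "\<And>k. norm (x k) \<le> Kx" "\<And>k. norm (B (x k)) \<le> KB"
    "\<And>k. norm (lam_prev k *\<^sub>R (B (x k) - B (x_prev k))) \<le> KR"
    using iterates_bounded[OF z] B_iterates_bounded reflection_terms_bounded[OF z]
    unfolding bounded_iff by fast
  have "norm (trial_point k l) \<le> norm z + ((Kx + norm z) + \<Lambda> * (KB + norm (B z)) + KR)"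
    if "0 < l" "l \<le> \<Lambda>" for k l
  proof -
    have "l * norm (B (x k) - B z) \<le> \<Lambda> * (KB + norm (B z))"
      using that K(2)[of k] norm_triangle_ineq4[of "B (x k)" "B z"] by (intro mult_mono) auto
    then have "norm (trial_point k l - z) \<le> (Kx + norm z) + \<Lambda> * (KB + norm (B z)) + KR"
      using trial_point_dist_le[OF z \<open>0 < l\<close>, of k] K(1,3)[of k] norm_triangle_ineq4[of "x k" z]
      by linarith
    then show ?thesis
      using norm_triangle_ineq2[of "trial_point k l" z] by linarith
  qed
  then show ?thesis
    by (intro boundedI) auto
qed

lemma stepsize_ge_min:
  assumes L: "L-lipschitz_on S B" "0 < L"
    and S: "range x \<subseteq> S" "{trial_point k l |k l. 0 < l \<and> l \<le> 1 / \<sigma>} \<subseteq> S"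
  shows "min (lam_prev k) (min 1 (\<sigma> * \<delta> / (2 * L))) \<le> lam k"
proof (cases "i k")
  case 0
  have "1 * lam_prev k \<le> \<rho> k * lam_prev k"
    using rho_ge[of k] lam_prev_pos[of k] by (intro mult_right_mono) auto
  then show ?thesis
    using lam_eq[of k] 0 by simp
next
  case (Suc j)
  define l where "l = \<rho> k * lam_prev k * \<sigma> ^ j"
  have lam_l: "lam k = \<sigma> * l"
    by (simp add: lam_eq Suc l_def)
  have "0 < l"
    using lam_pos[of k] sigma by (simp add: lam_l zero_less_mult_iff)
  show ?thesis
  proof (rule ccontr)
    assume "\<not> ?thesis"
    then have small: "lam k < 1" "lam k < \<sigma> * \<delta> / (2 * L)"
      by auto
    then have "l \<le> 1 / \<sigma>"
      using sigma by (simp add: lam_l field_simps)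
    then have "trial_point k l \<in> S"
      using S(2) \<open>0 < l\<close> by blast
    moreover have "\<delta> / 2 * norm (trial_point k l - x k) < l * norm (B (trial_point k l) - B (x k))"
      using backtracked[of j k] Suc by (simp add: acceptable_def l_def)
    ultimately have "\<delta> / 2 < l * L"
      using S(1) \<open>0 < l\<close> by (intro lipschitz_on_rejected_step[OF L(1)]) auto
    then have "\<sigma> * \<delta> / (2 * L) < lam k"
      using L(2) sigma by (simp add: lam_l field_simps)
    then show False
      using small by simp
  qed
qed

lemma stepsizes_bounded_below: "\<exists>m>0. \<forall>k. m \<le> lam k"
proof -
  obtain z where z: "- B z \<in> A z"
    by (rule solvableE)
  have "bounded (range x \<union> {trial_point k l |k l. 0 < l \<and> l \<le> 1 / \<sigma>})"
    by (simp add: bounded_Un iterates_bounded[OF z] trial_points_bounded)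
  then obtain c R where "range x \<union> {trial_point k l |k l. 0 < l \<and> l \<le> 1 / \<sigma>} \<subseteq> cball c R"
    unfolding bounded_subset_cball by blast
  then have R: "range x \<subseteq> cball c R" "{trial_point k l |k l. 0 < l \<and> l \<le> 1 / \<sigma>} \<subseteq> cball c R"
    by (simp_all only: Un_subset_iff)
  obtain L0 where L0: "L0-lipschitz_on (cball c R) B"
    using locally_lipschitz_compact[OF locally_lipschitz_B compact_cball] .
  then have L: "(L0 + 1)-lipschitz_on (cball c R) B" "0 < L0 + 1"
    using lipschitz_on_nonneg[OF L0] by (auto intro: lipschitz_on_mono)
  define m where "m = min (lam 0) (min 1 (\<sigma> * \<delta> / (2 * (L0 + 1))))"
  have "m \<le> lam k" for k
  proof (induction k)
    case 0
    then show ?case by (simp add: m_def)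
  next
    case (Suc k)
    then show ?case
      using stepsize_ge_min[OF L R, of "Suc k"] unfolding lam_prev_Suc m_def by linarith
  qed
  moreover have "0 < m"
    using lam_pos[of 0] sigma delta L(2) by (simp add: m_def)
  ultimately show ?thesis
    by blast
qed

lemma residual_tendsto_zero: "(\<lambda>k. A_selection k + B (x (Suc k))) \<longlonglongrightarrow> 0"
proof -
  obtain z where z: "- B z \<in> A z"
    by (rule solvableE)
  obtain m where m: "0 < m" "\<And>k. m \<le> lam k"
    using stepsizes_bounded_below by blast
  define s where "s k = norm (x (Suc k) - x k)" for k
  have s: "s \<longlonglongrightarrow> 0"
    using steps_tendsto_zero[OF z] by (simp add: s_def[abs_def] tendsto_norm_zero_iff)
  have bound: "norm (A_selection (Suc k) + B (x (Suc (Suc k))))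
      \<le> ((1 + \<delta> / 2) * s (Suc k) + \<delta> / 2 * s k) / m" for k
  proof -
    have "m * norm (A_selection (Suc k) + B (x (Suc (Suc k))))
        \<le> lam (Suc k) * norm (A_selection (Suc k) + B (x (Suc (Suc k))))"
      using m(2) by (rule mult_right_mono) simp
    also have "\<dots> \<le> (1 + \<delta> / 2) * s (Suc k) + \<delta> / 2 * s k"
      unfolding s_def by (rule residual_le)
    finally show ?thesis
      using m(1) by (simp add: pos_le_divide_eq mult.commute)
  qed
  have "(\<lambda>k. A_selection (Suc k) + B (x (Suc (Suc k)))) \<longlonglongrightarrow> 0"
  proof (rule Lim_null_comparison)
    show "\<forall>\<^sub>F k in sequentially. norm (A_selection (Suc k) + B (x (Suc (Suc k))))
        \<le> ((1 + \<delta> / 2) * s (Suc k) + \<delta> / 2 * s k) / m"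
      using bound by (intro always_eventually allI)
    have "(\<lambda>k. ((1 + \<delta> / 2) * s (Suc k) + \<delta> / 2 * s k) / m) \<longlonglongrightarrow> ((1 + \<delta> / 2) * 0 + \<delta> / 2 * 0) / m"
      using m(1) by (intro tendsto_intros s LIMSEQ_Suc[OF s]) simp
    then show "(\<lambda>k. ((1 + \<delta> / 2) * s (Suc k) + \<delta> / 2 * s k) / m) \<longlonglongrightarrow> 0"
      by simp
  qed
  then show ?thesis
    by (rule LIMSEQ_imp_Suc)
qed

lemma cluster_point_in_zeros:
  assumes r: "strict_mono r" and lim: "(x \<circ> r) \<longlonglongrightarrow> z"
  shows "z \<in> zeros_sum A B"
proof -
  obtain z0 where z0: "- B z0 \<in> A z0"
    by (rule solvableE)
  have "(\<lambda>n. x (r n) + (x (Suc (r n)) - x (r n))) \<longlonglongrightarrow> z + 0"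
    using lim LIMSEQ_subseq_LIMSEQ[OF steps_tendsto_zero[OF z0] r]
    by (intro tendsto_add) (auto simp: o_def)
  then have x_Suc: "(\<lambda>n. x (Suc (r n))) \<longlonglongrightarrow> z"
    by simp
  have "(\<lambda>n. (A_selection (r n) + B (x (Suc (r n)))) - B (x (Suc (r n)))) \<longlonglongrightarrow> 0 - B z"
    using LIMSEQ_subseq_LIMSEQ[OF residual_tendsto_zero r]
      isCont_tendsto_compose[OF locally_lipschitz_isCont[OF locally_lipschitz_B] x_Suc]
    by (intro tendsto_diff) (auto simp: o_def)
  then have "- B z \<in> A z"
    using maximal_monotone_mem_limit[OF maximal_monotone_A x_Suc _ A_selection_mem] by simp
  then show ?thesis
    by (simp add: zeros_sum_iff)
qed

theorem iterates_converge: "\<exists>z\<in>zeros_sum A B. x \<longlonglongrightarrow> z"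
proof -
  obtain z0 where z0: "- B z0 \<in> A z0"
    by (rule solvableE)
  obtain z r where r: "strict_mono r" "(x \<circ> r) \<longlonglongrightarrow> z"
    using bounded_imp_convergent_subsequence[OF iterates_bounded[OF z0]] by blast
  then have "z \<in> zeros_sum A B"
    by (rule cluster_point_in_zeros)
  moreover have "x \<longlonglongrightarrow> z"
    using dist_convergent \<open>z \<in> zeros_sum A B\<close>
    by (intro tendsto_if_subseq_tendsto_dist_convergent[OF r]) (simp add: zeros_sum_iff)
  ultimately show ?thesis
    by blast
qed

end

lemma backtracking_stepsizes_pos:
  fixes lam lam_prev \<rho> :: "nat \<Rightarrow> real"
  assumes "0 < lam_prev 0" "\<And>k. lam_prev (Suc k) = lam k"
    and "\<And>k. lam k = \<rho> k * lam_prev k * \<sigma> ^ i k" "\<And>k. 0 < \<rho> k" "0 < \<sigma>"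
  shows "0 < lam k"
proof -
  have "0 < lam_prev k"
    by (induction k) (use assms in auto)
  then show ?thesis
    using assms by simp
qed

theorem theorem3p4:
  fixes A :: "'a::euclidean_space \<Rightarrow> 'a set"
    and B :: "'a \<Rightarrow> 'a"
    and \<delta> \<sigma> :: real
    and x :: "int \<Rightarrow> 'a"
    and lam :: "int \<Rightarrow> real"
    and rho :: "nat \<Rightarrow> real"
    and i :: "nat \<Rightarrow> nat"
  assumes A: "maximal_monotone A"
    and Bmono: "monotone_fun B"
    and Blip: "locally_lipschitz B"
    and nonempty: "zeros_sum A B \<noteq> {}"
    and delta: "0 < \<delta>" "\<delta> < 1"
    and sigma: "0 < \<sigma>" "\<sigma> < 1"
    and lam0: "lam (-1) > 0"
    and rho: "\<And>k. rho k \<in> {1, 1 / \<sigma>}"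
    and step: "\<And>k. lam (int k) = rho k * lam (int k - 1) * \<sigma> ^ i k"
    and iter: "\<And>k. x (int k + 1) =
      resolvent (lam (int k)) A
        (x (int k) - lam (int k) *\<^sub>R B (x (int k))
           - lam (int k - 1) *\<^sub>R (B (x (int k)) - B (x (int k - 1))))"
    and accept: "\<And>k. lam (int k) * norm (B (x (int k + 1)) - B (x (int k)))
                     \<le> \<delta> / 2 * norm (x (int k + 1) - x (int k))"
    and least: "\<And>k j. j < i k \<Longrightarrow>
      (let l = rho k * lam (int k - 1) * \<sigma> ^ j;
           p = resolvent l A
                 (x (int k) - l *\<^sub>R B (x (int k))
                    - lam (int k - 1) *\<^sub>R (B (x (int k)) - B (x (int k - 1))))
       in \<not> (l * norm (B p - B (x (int k))) \<le> \<delta> / 2 * norm (p - x (int k))))"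
  shows "\<exists>z \<in> zeros_sum A B. (\<lambda>k. x (int k)) \<longlonglongrightarrow> z"
proof -
  define X where "X n = x (int n)" for n
  define X_prev where "X_prev n = x (int n - 1)" for n
  define Lam where "Lam n = lam (int n)" for n
  define Lam_prev where "Lam_prev n = lam (int n - 1)" for n
  have rho_ge: "1 \<le> rho k" for k
    using rho[of k] sigma by auto
  have Lam_pos: "0 < Lam k" for k
    by (rule backtracking_stepsizes_pos[where lam_prev = Lam_prev and \<rho> = rho and \<sigma> = \<sigma> and i = i])
      (use lam0 step sigma less_le_trans[OF zero_less_one rho_ge] in
        \<open>auto simp: Lam_def Lam_prev_def\<close>)
  interpret forward_reflected_backward A B \<delta> X X_prev Lam Lam_prev
    by unfold_locales
      (use A Bmono delta Lam_pos iter accept in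
        \<open>auto simp: X_def X_prev_def Lam_def Lam_prev_def add.commute\<close>)
  interpret forward_reflected_backward_linesearch A B \<delta> X X_prev Lam Lam_prev \<sigma> rho i
    by unfold_locales
      (use Blip nonempty sigma rho_ge step least in
        \<open>auto simp: X_def X_prev_def Lam_def Lam_prev_def Let_def acceptable_def trial_point_def\<close>)
  show ?thesis
    using iterates_converge by (simp add: X_def[abs_def])
qed

end
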